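(* Let $A$ be a $C^*$-algebra and $I\subseteq A$ a closed two-sided ideal. Then $A$ is nowhere scattered if and only if both $I$ and $A/I$ are nowhere scattered.
   Context: A minimal open projection in a $C^*$-algebra $B$ is a nonzero projection $p\in B$ with $pBp=\mathbb{C}p$. A $C^*$-algebra is nowhere scattered if none of its quotients (by closed two-sided ideals) contains a minimal open projection. *)

theory Defs
  imports "HOL-Analysis.Analysis"
begin

text \<open>Abstract (not necessarily unital) complex C*-algebras: a real Banach algebra
with a compatible complex scalar multiplication and an involution satisfying the
C*-identity.\<close>

class cstar_algebra = real_normed_algebra + banach +
  fixes cscale :: "complex \<Rightarrow> 'a \<Rightarrow> 'a"
    and adj :: "'a \<Rightarrow> 'a"
  assumes cscale_of_real: "cscale (complex_of_real r) x = scaleR r x"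
    and cscale_add_right: "cscale c (x + y) = cscale c x + cscale c y"
    and cscale_add_left: "cscale (c + d) x = cscale c x + cscale d x"
    and cscale_cscale: "cscale c (cscale d x) = cscale (c * d) x"
    and cscale_mult_left: "cscale c x * y = cscale c (x * y)"
    and cscale_mult_right: "x * cscale c y = cscale c (x * y)"
    and norm_cscale: "norm (cscale c x) = cmod c * norm x"
    and adj_adj: "adj (adj x) = x"
    and adj_add: "adj (x + y) = adj x + adj y"
    and adj_cscale: "adj (cscale c x) = cscale (cnj c) (adj x)"
    and adj_mult: "adj (x * y) = adj y * adj x"
    and cstar_identity: "norm (adj x * x) = (norm x)\<^sup>2"

definition closed_ideal :: "'a::cstar_algebra set \<Rightarrow> 'a set \<Rightarrow> bool" where
  "closed_ideal S J \<longleftrightarrow> J \<subseteq> S \<and> closed J \<and> 0 \<in> J \<and>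
     (\<forall>x\<in>J. \<forall>y\<in>J. x + y \<in> J) \<and> (\<forall>c. \<forall>x\<in>J. cscale c x \<in> J) \<and>
     (\<forall>a\<in>S. \<forall>x\<in>J. a * x \<in> J \<and> x * a \<in> J)"

text \<open>The quotient S/J contains a minimal open projection, written out on coset
representatives: some class p+J is a nonzero projection with
(p+J)(S/J)(p+J) = C(p+J).\<close>
definition quotient_has_min_proj :: "'a::cstar_algebra set \<Rightarrow> 'a set \<Rightarrow> bool" where
  "quotient_has_min_proj S J \<longleftrightarrow> (\<exists>p\<in>S. p \<notin> J \<and> adj p - p \<in> J \<and> p * p - p \<in> J \<and>
     (\<forall>b\<in>S. \<exists>c. p * b * p - cscale c p \<in> J) \<and>
     (\<forall>c. \<exists>b\<in>S. p * b * p - cscale c p \<in> J))"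

text \<open>The quotient C*-algebra S/K is nowhere scattered.  Closed ideals of S/K are
identified with closed ideals J of S containing K (correspondence theorem), and
(S/K)/(J/K) with S/J.\<close>
definition nowhere_scattered_quotient :: "'a::cstar_algebra set \<Rightarrow> 'a set \<Rightarrow> bool" where
  "nowhere_scattered_quotient S K \<longleftrightarrow>
     (\<forall>J. closed_ideal S J \<and> K \<subseteq> J \<longrightarrow> \<not> quotient_has_min_proj S J)"

definition nowhere_scattered :: "'a::cstar_algebra set \<Rightarrow> bool" where
  "nowhere_scattered S \<longleftrightarrow>
     (\<forall>J. closed_ideal S J \<longrightarrow> \<not> quotient_has_min_proj S J)"

end

theory Submission
  imports Defs
begin

text \<open>
  If \<open>p\<close> is a minimal open projection of a quotient \<open>I/J\<close> of the ideal, then it is one of \<open>A/K\<close>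
  for \<open>K = {a. I a I \<subseteq> J}\<close>, a closed ideal of \<open>A\<close> containing \<open>J\<close> but not \<open>p\<close>
  (as \<open>p\<^sup>3 \<notin> J\<close>); and quotients of \<open>A/I\<close> are quotients of \<open>A\<close>.

  Conversely, let \<open>p\<close> be a minimal open projection of \<open>A/J\<close>. If \<open>p I p \<subseteq> J\<close>, the largest ideal
  \<open>L\<close> with \<open>p L p \<subseteq> J\<close> contains \<open>I\<close> and \<open>J\<close> but not \<open>p\<close>, so \<open>p\<close> stays minimal in \<open>A/L\<close>,
  a quotient of \<open>A/I\<close>. Otherwise some \<open>w = p i p\<close> with \<open>i \<in> I\<close> is congruent to \<open>c p\<close> with
  \<open>c \<noteq> 0\<close>, and \<open>q = w\<^sup>* w / \<bar>c\<bar>\<^sup>2 \<in> I\<close> is self-adjoint and congruent to \<open>p\<close>, hence a minimal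
  open projection of \<open>I/(I \<inter> J)\<close>.

  Computing \<open>w\<^sup>* w\<close> modulo \<open>J\<close> needs that the scalar \<open>\<phi>(h)\<close> with \<open>p h p \<equiv> \<phi>(h) p\<close> is real
  for self-adjoint \<open>h\<close>. This is the usual proof that self-adjoint elements have real spectrum:
  \<open>x \<equiv> \<mu> p\<close> forces \<open>\<bar>\<mu>\<bar> \<le> \<parallel>x\<parallel>\<close>, since \<open>x\<^sup>n \<equiv> \<mu>\<^sup>n p\<close> and \<open>J\<close> is closed; applied to
  \<open>y (y + i s)\<^sup>m\<close>, whose squared norm is at most \<open>\<parallel>y\<parallel>\<^sup>2 (\<parallel>y\<parallel>\<^sup>2 + s\<^sup>2)\<^sup>m\<close> by the C*-identity,
  this gives \<open>\<bar>\<phi>(h) + i s\<bar>\<^sup>2 \<le> \<parallel>y\<parallel>\<^sup>2 + s\<^sup>2\<close> for all real \<open>s\<close>.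
\<close>

lemma cscale_zero_left [simp]: "cscale 0 (x::'a::cstar_algebra) = 0"
  using cscale_of_real[of 0 x] by simp

lemma cscale_one [simp]: "cscale 1 (x::'a::cstar_algebra) = x"
  using cscale_of_real[of 1 x] by simp

lemma cscale_zero_right [simp]: "cscale c (0::'a::cstar_algebra) = 0"
  using cscale_add_right[of c 0 0] by simp

lemma cscale_minus_right: "cscale c (- x) = - cscale c (x::'a::cstar_algebra)"
  using minus_unique[of "cscale c x" "cscale c (- x)"] cscale_add_right[of c x "- x"] by simp

lemma cscale_diff_right: "cscale c (x - y) = cscale c x - cscale c (y::'a::cstar_algebra)"
  using cscale_add_right[of c x "- y"] by (simp add: cscale_minus_right)

lemma cscale_minus_left: "cscale (- c) x = - cscale c (x::'a::cstar_algebra)"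
  using minus_unique[of "cscale c x" "cscale (- c) x"] cscale_add_left[of c "- c" x] by simp

lemma cscale_diff_left: "cscale (c - d) x = cscale c x - cscale d (x::'a::cstar_algebra)"
  using cscale_add_left[of c "- d" x] by (simp add: cscale_minus_left)

lemma adj_zero [simp]: "adj (0::'a::cstar_algebra) = 0"
  using adj_add[of 0 0] by simp

lemma adj_minus: "adj (- x) = - adj (x::'a::cstar_algebra)"
  using minus_unique[of "adj x" "adj (- x)"] adj_add[of x "- x"] by simp

lemma adj_diff: "adj (x - y) = adj x - adj (y::'a::cstar_algebra)"
  using adj_add[of x "- y"] by (simp add: adj_minus)

lemma closed_ideal_UNIV: "closed_ideal UNIV (UNIV::'a::cstar_algebra set)"
  by (simp add: closed_ideal_def)

context
  fixes S J :: "'a::cstar_algebra set"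
  assumes J: "closed_ideal S J"
begin

lemma closed_ideal_subset: "J \<subseteq> S"
  and closed_ideal_closed: "closed J"
  and closed_ideal_zero: "0 \<in> J"
  and closed_ideal_add: "x \<in> J \<Longrightarrow> y \<in> J \<Longrightarrow> x + y \<in> J"
  and closed_ideal_cscale: "x \<in> J \<Longrightarrow> cscale c x \<in> J"
  and closed_ideal_mult_left: "a \<in> S \<Longrightarrow> x \<in> J \<Longrightarrow> a * x \<in> J"
  and closed_ideal_mult_right: "a \<in> S \<Longrightarrow> x \<in> J \<Longrightarrow> x * a \<in> J"
  using J by (simp_all add: closed_ideal_def)

lemma closed_ideal_minus: "x \<in> J \<Longrightarrow> - x \<in> J"
  using closed_ideal_cscale[of x "- 1"] by (simp add: cscale_minus_left)

lemma closed_ideal_diff: "x \<in> J \<Longrightarrow> y \<in> J \<Longrightarrow> x - y \<in> J"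
  using closed_ideal_add[of x "- y"] closed_ideal_minus[of y] by simp

end

lemma closed_ideal_Int:
  assumes "closed_ideal S I" and "closed_ideal S J"
  shows "closed_ideal I (J \<inter> I)"
  using assms closed_ideal_subset[OF assms(1)]
  unfolding closed_ideal_def by auto

section \<open>Minimal projections modulo a closed ideal\<close>

lemma closed_ideal_mult_congruent:
  assumes J: "closed_ideal UNIV J" and "x - x' \<in> J" and "y - y' \<in> J"
  shows "x * y - x' * y' \<in> J"
proof -
  have "x * y - x' * y' = (x - x') * y + x' * (y - y')"
    by (simp add: algebra_simps)
  also have "\<dots> \<in> J"
    using assms by (simp add: closed_ideal_add[OF J] closed_ideal_mult_left[OF J] closed_ideal_mult_right[OF J])
  finally show ?thesis .
qed

definition min_proj_modulo :: "'a::cstar_algebra set \<Rightarrow> 'a set \<Rightarrow> 'a \<Rightarrow> bool" where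
  "min_proj_modulo S J p \<longleftrightarrow> p \<in> S \<and> p \<notin> J \<and> adj p - p \<in> J \<and> p * p - p \<in> J \<and>
     (\<forall>b\<in>S. \<exists>c. p * b * p - cscale c p \<in> J)"

lemma cube_minus_mod_idempotent:
  assumes "closed_ideal S J" and "p \<in> S" and "p * p - p \<in> J"
  shows "p * p * p - p \<in> J"
proof -
  have "p * p * p - p = p * (p * p - p) + (p * p - p)"
    by (simp add: algebra_simps)
  then show ?thesis
    using assms by (metis closed_ideal_add closed_ideal_mult_left)
qed

lemma min_proj_modulo_cube_notin:
  assumes "closed_ideal S J" and "min_proj_modulo S J p"
  shows "p * p * p \<notin> J"
proof
  assume "p * p * p \<in> J"
  moreover have "p * p * p - p \<in> J"
    using assms cube_minus_mod_idempotent by (auto simp: min_proj_modulo_def)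
  ultimately have "p * p * p - (p * p * p - p) \<in> J"
    using assms(1) closed_ideal_diff by blast
  with assms(2) show False
    by (simp add: min_proj_modulo_def)
qed

lemma quotient_has_min_proj_iff:
  assumes S: "closed_ideal UNIV S" and J: "closed_ideal S J"
  shows "quotient_has_min_proj S J \<longleftrightarrow> (\<exists>p. min_proj_modulo S J p)"
proof
  assume "\<exists>p. min_proj_modulo S J p"
  then obtain p where p: "min_proj_modulo S J p" ..
  have "p * cscale c p * p - cscale c p \<in> J" for c
  proof -
    have "p * cscale c p * p - cscale c p = cscale c (p * p * p - p)"
      by (simp add: cscale_mult_left cscale_mult_right cscale_diff_right)
    then show ?thesis
      using p J cube_minus_mod_idempotent closed_ideal_cscale
      by (metis min_proj_modulo_def)
  qed
  moreover have "cscale c p \<in> S" for c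
    using p S closed_ideal_cscale by (auto simp: min_proj_modulo_def)
  ultimately show "quotient_has_min_proj S J"
    using p unfolding quotient_has_min_proj_def min_proj_modulo_def by blast
qed (auto simp: quotient_has_min_proj_def min_proj_modulo_def)

lemma min_proj_modulo_larger_ideal:
  assumes "min_proj_modulo S J p" and "J \<subseteq> L" and "p \<notin> L"
  shows "min_proj_modulo S L p"
  using assms unfolding min_proj_modulo_def by blast

definition sandwich_ideal :: "'a::cstar_algebra set \<Rightarrow> 'a set \<Rightarrow> 'a set \<Rightarrow> 'a set" where
  "sandwich_ideal X J Y = {a. \<forall>x\<in>X. \<forall>y\<in>Y. x * a * y \<in> J}"

lemma closed_ideal_sandwich_ideal:
  assumes J: "closed_ideal S J"
    and X: "\<And>x a. x \<in> X \<Longrightarrow> x * a \<in> X" and Y: "\<And>y a. y \<in> Y \<Longrightarrow> a * y \<in> Y"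
  shows "closed_ideal UNIV (sandwich_ideal X J Y)"
  unfolding closed_ideal_def
proof (intro conjI ballI allI)
  have "sandwich_ideal X J Y = (\<Inter>x\<in>X. \<Inter>y\<in>Y. (\<lambda>a. x * a * y) -` J)"
    by (auto simp: sandwich_ideal_def)
  moreover have "closed ((\<lambda>a. x * a * y) -` J)" for x y
    using closed_ideal_closed[OF J] by (intro closed_vimage continuous_intros)
  ultimately show "closed (sandwich_ideal X J Y)"
    by (auto intro!: closed_INT)
next
  fix a k assume k: "k \<in> sandwich_ideal X J Y"
  have "x * a * k * y \<in> J" "x * k * (a * y) \<in> J" if "x \<in> X" "y \<in> Y" for x y
    using that k X Y by (auto simp: sandwich_ideal_def)
  then show "a * k \<in> sandwich_ideal X J Y" "k * a \<in> sandwich_ideal X J Y"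
    by (simp_all add: sandwich_ideal_def mult.assoc)
qed (use J in \<open>auto simp: sandwich_ideal_def algebra_simps cscale_mult_left cscale_mult_right
      intro: closed_ideal_zero closed_ideal_add closed_ideal_cscale\<close>)

lemma ideal_subset_sandwich_ideal:
  assumes "closed_ideal S J" and "X \<subseteq> S" and "Y \<subseteq> S"
  shows "J \<subseteq> sandwich_ideal X J Y"
  using assms closed_ideal_mult_left closed_ideal_mult_right
  by (fastforce simp: sandwich_ideal_def)

lemma min_proj_modulo_sandwich_ideal:
  assumes I: "closed_ideal UNIV I" and J: "closed_ideal I J" and p: "min_proj_modulo I J p"
  shows "min_proj_modulo UNIV (sandwich_ideal I J I) p"
proof -
  let ?K = "sandwich_ideal I J I"
  have pI: "p \<in> I" and pp: "p * p - p \<in> J"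
    using p by (simp_all add: min_proj_modulo_def)
  have JK: "J \<subseteq> ?K"
    using ideal_subset_sandwich_ideal[OF J] by blast
  have pK: "p \<notin> ?K"
    using min_proj_modulo_cube_notin[OF J p] pI by (auto simp: sandwich_ideal_def)
  have "\<exists>c. p * b * p - cscale c p \<in> ?K" for b
  proof -
    have "p * b * p \<in> I" "b * p \<in> I" "p * p * b \<in> I"
      using pI by (simp_all add: closed_ideal_mult_left[OF I] closed_ideal_mult_right[OF I])
    then obtain c where c: "p * (p * b * p) * p - cscale c p \<in> J"
      using p by (auto simp: min_proj_modulo_def)
    have eq: "p * b * p - cscale c p =
        (p - p * p) * (b * p) + (p * p * b) * (p - p * p) + (p * (p * b * p) * p - cscale c p)"
      by (simp add: algebra_simps)
    have "p - p * p \<in> J"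
      using closed_ideal_minus[OF J pp] by simp
    then have "p * b * p - cscale c p \<in> J"
      unfolding eq
      by (intro closed_ideal_add[OF J] closed_ideal_mult_left[OF J \<open>p * p * b \<in> I\<close>]
          closed_ideal_mult_right[OF J \<open>b * p \<in> I\<close>] c)
    then show ?thesis
      using JK by blast
  qed
  then show ?thesis
    using p JK pK by (auto simp: min_proj_modulo_def)
qed

lemma nowhere_scattered_ideal:
  fixes I :: "'a::cstar_algebra set"
  assumes I: "closed_ideal UNIV I" and ns: "nowhere_scattered (UNIV::'a set)"
  shows "nowhere_scattered I"
  unfolding nowhere_scattered_def
proof (intro allI impI notI)
  fix J assume J: "closed_ideal I J" and "quotient_has_min_proj I J"
  then obtain p where "min_proj_modulo I J p"
    using quotient_has_min_proj_iff[OF I] by blast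
  then have "min_proj_modulo UNIV (sandwich_ideal I J I) p"
    by (rule min_proj_modulo_sandwich_ideal[OF I J])
  moreover have K: "closed_ideal UNIV (sandwich_ideal I J I)"
    using closed_ideal_mult_left[OF I] closed_ideal_mult_right[OF I]
    by (intro closed_ideal_sandwich_ideal[OF J]) auto
  ultimately have "quotient_has_min_proj UNIV (sandwich_ideal I J I)"
    using quotient_has_min_proj_iff[OF closed_ideal_UNIV K] by blast
  with ns K show False
    unfolding nowhere_scattered_def by blast
qed

lemma nowhere_scattered_imp_quotient:
  fixes I :: "'a::cstar_algebra set"
  shows "nowhere_scattered (UNIV::'a set) \<Longrightarrow> nowhere_scattered_quotient UNIV I"
  unfolding nowhere_scattered_def nowhere_scattered_quotient_def by auto

lemma not_nowhere_scattered_quotient_if_compression_vanishes: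
  fixes I :: "'a::cstar_algebra set"
  assumes I: "closed_ideal UNIV I" and J: "closed_ideal UNIV J" and p: "min_proj_modulo UNIV J p"
    and vanish: "\<forall>i\<in>I. p * i * p \<in> J"
  shows "\<not> nowhere_scattered_quotient UNIV I"
proof -
  \<comment> \<open>\<open>X = p A\<^sup>+\<close> and \<open>Y = A\<^sup>+ p\<close> for the unitization \<open>A\<^sup>+\<close>\<close>
  define X where "X = {x. x = p \<or> (\<exists>u. x = p * u)}"
  define Y where "Y = {y. y = p \<or> (\<exists>u. y = u * p)}"
  let ?L = "sandwich_ideal X J Y"
  have L: "closed_ideal UNIV ?L"
  proof (rule closed_ideal_sandwich_ideal[OF J])
    show "x * a \<in> X" if "x \<in> X" for x a
      using that by (auto simp: X_def mult.assoc)
    show "a * y \<in> Y" if "y \<in> Y" for y a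
      using that by (auto simp: Y_def mult.assoc[symmetric])
  qed
  have "I \<subseteq> ?L"
  proof
    fix i assume i: "i \<in> I"
    have "x * i * y \<in> J" if "x \<in> X" "y \<in> Y" for x y
    proof -
      have "\<exists>u\<in>I. x * i = p * u"
        using \<open>x \<in> X\<close> i closed_ideal_mult_left[OF I] by (auto simp: X_def mult.assoc)
      then obtain u where u: "u \<in> I" "x * i = p * u" ..
      have "\<exists>v\<in>I. u * y = v * p"
        using \<open>y \<in> Y\<close> u closed_ideal_mult_right[OF I] by (auto simp: Y_def mult.assoc[symmetric])
      then obtain v where v: "v \<in> I" "u * y = v * p" ..
      have "x * i * y = p * v * p"
        using u v by (simp add: mult.assoc)
      then show ?thesis
        using vanish v by simp
    qed
    then show "i \<in> ?L"
      by (simp add: sandwich_ideal_def)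
  qed
  moreover have "min_proj_modulo UNIV ?L p"
  proof (rule min_proj_modulo_larger_ideal[OF p])
    show "J \<subseteq> ?L"
      using ideal_subset_sandwich_ideal[OF J] by blast
    show "p \<notin> ?L"
      using min_proj_modulo_cube_notin[OF J p] by (auto simp: sandwich_ideal_def X_def Y_def)
  qed
  ultimately show ?thesis
    using L quotient_has_min_proj_iff[OF closed_ideal_UNIV L] ideal_subset_sandwich_ideal[OF J]
    unfolding nowhere_scattered_quotient_def by blast
qed

section \<open>Compressions of self-adjoint elements are real\<close>

lemma norm_funpow_mult_right_le:
  fixes x :: "'a::real_normed_algebra"
  shows "norm (((\<lambda>y. y * x) ^^ n) x) \<le> norm x ^ Suc n"
proof (induction n)
  case (Suc n)
  have "norm (((\<lambda>y. y * x) ^^ Suc n) x) \<le> norm (((\<lambda>y. y * x) ^^ n) x) * norm x"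
    by (simp add: norm_mult_ineq)
  also have "\<dots> \<le> norm x ^ Suc n * norm x"
    using Suc by (simp add: mult_right_mono)
  finally show ?case
    by (simp add: mult.commute)
qed simp

lemma funpow_mult_right_congruent:
  fixes p x :: "'a::cstar_algebra"
  assumes J: "closed_ideal UNIV J" and pp: "p * p - p \<in> J" and x: "x - cscale \<mu> p \<in> J"
  shows "((\<lambda>y. y * x) ^^ n) x - cscale (\<mu> ^ Suc n) p \<in> J"
proof (induction n)
  case (Suc n)
  let ?P = "((\<lambda>y. y * x) ^^ n) x"
  have "((\<lambda>y. y * x) ^^ Suc n) x - cscale (\<mu> ^ Suc (Suc n)) p =
      (?P - cscale (\<mu> ^ Suc n) p) * x
      + cscale (\<mu> ^ Suc n) (p * (x - cscale \<mu> p) + cscale \<mu> (p * p - p))"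
    by (simp add: algebra_simps cscale_diff_right cscale_add_right cscale_cscale
        cscale_mult_left cscale_mult_right)
  then show ?case
    using Suc.IH x pp
    by (simp add: closed_ideal_add[OF J] closed_ideal_cscale[OF J] closed_ideal_mult_left[OF J]
        closed_ideal_mult_right[OF J])
qed (simp add: x)

lemma cmod_le_norm_if_congruent_scalar:
  fixes p x :: "'a::cstar_algebra"
  assumes J: "closed_ideal UNIV J" and pJ: "p \<notin> J" and pp: "p * p - p \<in> J"
    and x: "x - cscale \<mu> p \<in> J"
  shows "cmod \<mu> \<le> norm x"
proof (rule ccontr)
  assume "\<not> cmod \<mu> \<le> norm x"
  then have lt: "norm x < cmod \<mu>" by simp
  then have \<mu>0: "\<mu> \<noteq> 0"
    using norm_ge_zero[of x] by auto
  define P where "P n = ((\<lambda>y. y * x) ^^ n) x" for n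
  have P_cong: "P n - cscale (\<mu> ^ Suc n) p \<in> J" for n
    unfolding P_def by (rule funpow_mult_right_congruent[OF J pp x])
  define f where "f n = p - cscale (inverse (\<mu> ^ Suc n)) (P n)" for n
  have fJ: "f n \<in> J" for n
  proof -
    have "cscale (inverse (\<mu> ^ Suc n)) (cscale (\<mu> ^ Suc n) p) = p"
      by (simp only: cscale_cscale left_inverse[OF power_not_zero[OF \<mu>0]] cscale_one)
    then have "f n = - cscale (inverse (\<mu> ^ Suc n)) (P n - cscale (\<mu> ^ Suc n) p)"
      by (simp add: f_def cscale_diff_right)
    then show ?thesis
      using P_cong by (simp add: closed_ideal_minus[OF J] closed_ideal_cscale[OF J])
  qed
  define r where "r = norm x / cmod \<mu>"
  have r: "0 \<le> r" "r < 1"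
    using lt \<mu>0 by (auto simp: r_def)
  have bound: "norm (p - f n) \<le> r ^ Suc n" for n
  proof -
    have "norm (p - f n) = norm (P n) / cmod \<mu> ^ Suc n"
      by (simp add: f_def norm_cscale norm_inverse norm_power norm_mult divide_inverse mult.commute)
    also have "\<dots> \<le> norm x ^ Suc n / cmod \<mu> ^ Suc n"
      using norm_funpow_mult_right_le[of n x] by (simp add: P_def divide_right_mono)
    also have "\<dots> = r ^ Suc n"
      by (simp add: r_def power_divide)
    finally show ?thesis .
  qed
  have "(\<lambda>n. r ^ Suc n) \<longlonglongrightarrow> 0"
    using tendsto_mult_right_zero[OF LIMSEQ_power_zero[of r], of r] r by simp
  then have "(\<lambda>n. p - f n) \<longlonglongrightarrow> 0"
    by (rule Lim_null_comparison[rotated]) (use bound in \<open>simp del: power_Suc\<close>)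
  then have "f \<longlonglongrightarrow> p"
    using tendsto_diff[OF tendsto_const[of p], of "\<lambda>n. p - f n" 0] by simp
  then have "p \<in> J"
    using closed_sequentially[OF closed_ideal_closed[OF J]] fJ by blast
  with pJ show False ..
qed

text \<open>\<open>shifted_power y z m\<close> is \<open>y (y + z)\<^sup>m\<close>, written without a unit.\<close>

fun shifted_power :: "'a::cstar_algebra \<Rightarrow> complex \<Rightarrow> nat \<Rightarrow> 'a" where
  "shifted_power y z 0 = y"
| "shifted_power y z (Suc m) = shifted_power y z m * y + cscale z (shifted_power y z m)"

lemma shifted_power_commute: "y * shifted_power y z m = shifted_power y z m * y"
  by (induction m)
    (simp_all add: distrib_left distrib_right cscale_mult_left cscale_mult_right flip: mult.assoc)

lemma adj_shifted_power_mult_self_Suc: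
  fixes y :: "'a::cstar_algebra" and s :: real and m :: nat
  assumes y: "adj y = y"
  defines "Q \<equiv> shifted_power y (\<i> * complex_of_real s) m"
  defines "W \<equiv> adj Q * Q"
  shows "adj (shifted_power y (\<i> * complex_of_real s) (Suc m)) *
      shifted_power y (\<i> * complex_of_real s) (Suc m) = y * W * y + scaleR (s\<^sup>2) W"
proof -
  let ?z = "\<i> * complex_of_real s"
  have "adj Q * y = y * adj Q"
    using arg_cong[OF shifted_power_commute[of y ?z m, folded Q_def], of adj] y
    by (simp add: adj_mult)
  then have "y * W = adj Q * (y * Q)"
    by (simp add: W_def flip: mult.assoc)
  also have "\<dots> = W * y"
    by (simp add: W_def Q_def shifted_power_commute mult.assoc)
  finally have yW: "y * W = W * y" .
  have "adj (shifted_power y ?z (Suc m)) = y * adj Q - cscale ?z (adj Q)"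
    by (simp add: Q_def adj_add adj_mult adj_cscale y cscale_minus_left)
  then have "adj (shifted_power y ?z (Suc m)) * shifted_power y ?z (Suc m)
      = (y * adj Q - cscale ?z (adj Q)) * (Q * y + cscale ?z Q)"
    by (simp add: Q_def)
  also have "\<dots> = y * W * y + cscale ?z (y * W) - cscale ?z (W * y) - cscale (?z * ?z) W"
    by (simp add: W_def algebra_simps cscale_mult_left cscale_mult_right cscale_cscale
        cscale_diff_right cscale_add_right)
  also have "\<dots> = y * W * y + scaleR (s\<^sup>2) W"
    using cscale_of_real[of "s\<^sup>2" W] cscale_minus_left[of "?z * ?z" W]
    by (simp add: yW power2_eq_square algebra_simps)
  finally show ?thesis .
qed

lemma norm_shifted_power_sq_le:
  fixes y :: "'a::cstar_algebra"
  assumes y: "adj y = y"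
  shows "(norm (shifted_power y (\<i> * complex_of_real s) m))\<^sup>2 \<le> (norm y)\<^sup>2 * ((norm y)\<^sup>2 + s\<^sup>2) ^ m"
proof (induction m)
  case (Suc m)
  define W where
    "W = adj (shifted_power y (\<i> * complex_of_real s) m) * shifted_power y (\<i> * complex_of_real s) m"
  have "(norm (shifted_power y (\<i> * complex_of_real s) (Suc m)))\<^sup>2 =
      norm (y * W * y + scaleR (s\<^sup>2) W)"
    using adj_shifted_power_mult_self_Suc[OF y, of s m] by (simp add: W_def flip: cstar_identity)
  also have "\<dots> \<le> norm y * norm W * norm y + s\<^sup>2 * norm W"
    by (rule order_trans[OF norm_triangle_ineq])
      (simp add: add_mono order_trans[OF norm_mult_ineq] mult_right_mono norm_mult_ineq)
  also have "\<dots> = ((norm y)\<^sup>2 + s\<^sup>2) * norm W"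
    by (simp add: algebra_simps power2_eq_square)
  also have "\<dots> \<le> ((norm y)\<^sup>2 + s\<^sup>2) * ((norm y)\<^sup>2 * ((norm y)\<^sup>2 + s\<^sup>2) ^ m)"
    using Suc by (intro mult_left_mono) (simp_all add: W_def cstar_identity)
  finally show ?case
    by (simp add: algebra_simps)
qed (simp add: cstar_identity)

lemma shifted_power_congruent:
  fixes p y :: "'a::cstar_algebra"
  assumes J: "closed_ideal UNIV J"
    and y: "y - cscale \<alpha> p \<in> J" and py: "p * y - cscale \<alpha> p \<in> J"
  shows "shifted_power y z m - cscale (\<alpha> * (\<alpha> + z) ^ m) p \<in> J"
proof (induction m)
  case (Suc m)
  define \<mu> where "\<mu> = \<alpha> * (\<alpha> + z) ^ m"
  have "shifted_power y z (Suc m) - cscale (\<alpha> * (\<alpha> + z) ^ Suc m) p =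
      (shifted_power y z m - cscale \<mu> p) * y + cscale \<mu> (p * y - cscale \<alpha> p)
      + cscale z (shifted_power y z m - cscale \<mu> p)"
    by (simp add: \<mu>_def algebra_simps cscale_mult_left cscale_mult_right cscale_cscale
        cscale_diff_right cscale_add_right cscale_add_left)
  then show ?case
    using Suc.IH py
    by (simp add: \<mu>_def closed_ideal_add[OF J] closed_ideal_cscale[OF J]
        closed_ideal_mult_right[OF J])
qed (simp add: y)

lemma le_if_mult_powers_le:
  fixes a b c d :: real
  assumes le: "\<And>m. a * c ^ m \<le> b * d ^ m" and a: "a > 0" and d: "d \<ge> 0"
  shows "c \<le> d"
proof (rule ccontr)
  assume "\<not> c \<le> d"
  then have cd: "c > d" by simp
  show False
  proof (cases "d = 0")
    case True
    then show False
      using le[of 1] cd a by (simp add: mult_le_0_iff)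
  next
    case False
    with d have d: "d > 0" by simp
    with cd have "1 < c / d" by simp
    then obtain n where n: "b / a < (c / d) ^ n"
      using real_arch_pow by blast
    have "(c / d) ^ n \<le> b / a"
      using le[of n] d a by (simp add: power_divide divide_le_eq le_divide_eq mult.commute)
    with n show False by simp
  qed
qed

lemma Im_eq_0_if_cmod_add_imaginary_bounded:
  assumes bounded: "\<And>s. (cmod (\<alpha> + \<i> * complex_of_real s))\<^sup>2 \<le> C + s\<^sup>2"
  shows "Im \<alpha> = 0"
proof (rule ccontr)
  assume Im: "Im \<alpha> \<noteq> 0"
  define s where "s = (C + 1) / (2 * Im \<alpha>)"
  have "(cmod (\<alpha> + \<i> * complex_of_real s))\<^sup>2 = (Re \<alpha>)\<^sup>2 + (Im \<alpha> + s)\<^sup>2"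
    by (simp add: cmod_power2)
  also have "\<dots> = (Re \<alpha>)\<^sup>2 + (Im \<alpha>)\<^sup>2 + (C + 1) + s\<^sup>2"
    using Im by (simp add: s_def power2_eq_square field_simps)
  finally show False
    using bounded[of s] by (smt (verit) zero_le_power2)
qed

lemma cmod_add_imaginary_sq_le:
  fixes p y :: "'a::cstar_algebra"
  assumes J: "closed_ideal UNIV J" and pJ: "p \<notin> J" and pp: "p * p - p \<in> J"
    and y: "adj y = y" "y - cscale \<alpha> p \<in> J" "p * y - cscale \<alpha> p \<in> J"
    and \<alpha>: "\<alpha> \<noteq> 0"
  shows "(cmod (\<alpha> + \<i> * complex_of_real s))\<^sup>2 \<le> (norm y)\<^sup>2 + s\<^sup>2"
proof -
  let ?z = "\<i> * complex_of_real s"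
  have "(cmod \<alpha>)\<^sup>2 * ((cmod (\<alpha> + ?z))\<^sup>2) ^ m \<le> (norm y)\<^sup>2 * ((norm y)\<^sup>2 + s\<^sup>2) ^ m" for m
  proof -
    have "cmod (\<alpha> * (\<alpha> + ?z) ^ m) \<le> norm (shifted_power y ?z m)"
      using cmod_le_norm_if_congruent_scalar[OF J pJ pp shifted_power_congruent[OF J y(2,3)]] .
    then have "(cmod (\<alpha> * (\<alpha> + ?z) ^ m))\<^sup>2 \<le> (norm (shifted_power y ?z m))\<^sup>2"
      by (simp add: power_mono)
    also have "\<dots> \<le> (norm y)\<^sup>2 * ((norm y)\<^sup>2 + s\<^sup>2) ^ m"
      using norm_shifted_power_sq_le[OF y(1)] .
    finally show ?thesis
      by (simp add: norm_mult norm_power power_mult_distrib mult.commute flip: power_mult)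
  qed
  then show ?thesis
    by (rule le_if_mult_powers_le) (use \<alpha> in auto)
qed

lemma Im_eq_0_if_selfadjoint_compression:
  fixes p h :: "'a::cstar_algebra"
  assumes J: "closed_ideal UNIV J" and pJ: "p \<notin> J" and pa: "adj p - p \<in> J"
    and pp: "p * p - p \<in> J" and h: "adj h = h" and php: "p * h * p - cscale \<alpha> p \<in> J"
  shows "Im \<alpha> = 0"
proof (cases "\<alpha> = 0")
  case False
  define y where "y = adj p * h * p"
  have "adj y = y"
    by (simp add: y_def adj_mult adj_adj h mult.assoc)
  moreover have "y - cscale \<alpha> p \<in> J"
  proof -
    have "y - cscale \<alpha> p = (adj p - p) * (h * p) + (p * h * p - cscale \<alpha> p)"
      by (simp add: y_def algebra_simps)
    also have "\<dots> \<in> J"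
      using pa php by (intro closed_ideal_add[OF J] closed_ideal_mult_right[OF J UNIV_I])
    finally show ?thesis .
  qed
  moreover have "p * y - cscale \<alpha> p \<in> J"
  proof -
    have "p * y - cscale \<alpha> p =
        p * ((adj p - p) * (h * p)) + (p * p - p) * (h * p) + (p * h * p - cscale \<alpha> p)"
      by (simp add: y_def algebra_simps)
    also have "\<dots> \<in> J"
      using closed_ideal_mult_left[OF J UNIV_I closed_ideal_mult_right[OF J UNIV_I pa]]
        closed_ideal_mult_right[OF J UNIV_I pp] php
      by (intro closed_ideal_add[OF J])
    finally show ?thesis .
  qed
  ultimately show ?thesis
    using cmod_add_imaginary_sq_le[OF J pJ pp _ _ _ False] Im_eq_0_if_cmod_add_imaginary_bounded
    by blast
qed simp

lemma compression_adj_congruent: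
  fixes p b :: "'a::cstar_algebra"
  assumes J: "closed_ideal UNIV J" and p: "min_proj_modulo UNIV J p"
    and b: "p * b * p - cscale c p \<in> J"
  shows "p * adj b * p - cscale (cnj c) p \<in> J"
proof -
  have pJ: "p \<notin> J" and pa: "adj p - p \<in> J" and pp: "p * p - p \<in> J"
    using p by (simp_all add: min_proj_modulo_def)
  obtain d where d: "p * adj b * p - cscale d p \<in> J"
    using p by (auto simp: min_proj_modulo_def)
  have "Im (c + d) = 0"
  proof (rule Im_eq_0_if_selfadjoint_compression[OF J pJ pa pp])
    show "adj (b + adj b) = b + adj b"
      by (simp add: adj_add adj_adj add.commute)
    have "p * (b + adj b) * p - cscale (c + d) p = (p * b * p - cscale c p) + (p * adj b * p - cscale d p)"
      by (simp add: algebra_simps cscale_add_left)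
    also have "\<dots> \<in> J"
      using b d by (rule closed_ideal_add[OF J])
    finally show "p * (b + adj b) * p - cscale (c + d) p \<in> J" .
  qed
  moreover have "Im (\<i> * (c - d)) = 0"
  proof (rule Im_eq_0_if_selfadjoint_compression[OF J pJ pa pp])
    show "adj (cscale \<i> (b - adj b)) = cscale \<i> (b - adj b)"
      by (simp add: adj_cscale adj_diff adj_adj cscale_diff_right cscale_minus_left)
    have "p * cscale \<i> (b - adj b) * p - cscale (\<i> * (c - d)) p
        = cscale \<i> ((p * b * p - cscale c p) - (p * adj b * p - cscale d p))"
      by (simp add: algebra_simps cscale_mult_left cscale_mult_right cscale_diff_right
          cscale_diff_left cscale_cscale cscale_add_right)
    also have "\<dots> \<in> J"
      by (rule closed_ideal_cscale[OF J closed_ideal_diff[OF J b d]])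
    finally show "p * cscale \<i> (b - adj b) * p - cscale (\<i> * (c - d)) p \<in> J" .
  qed
  ultimately have "d = cnj c"
    by (simp add: complex_eq_iff)
  with d show ?thesis by simp
qed

section \<open>Moving a minimal projection into the ideal\<close>

lemma adj_mult_self_congruent:
  fixes p w :: "'a::cstar_algebra"
  assumes J: "closed_ideal UNIV J" and pp: "p * p - p \<in> J"
    and w: "w - cscale c p \<in> J" and aw: "adj w - cscale (cnj c) p \<in> J"
  shows "adj w * w - cscale (complex_of_real ((cmod c)\<^sup>2)) p \<in> J"
proof -
  have "adj w * w - cscale (cnj c) p * cscale c p \<in> J"
    by (rule closed_ideal_mult_congruent[OF J aw w])
  moreover have "cscale (cnj c) p * cscale c p - cscale (cnj c * c) p \<in> J"
    using closed_ideal_cscale[OF J pp, of "cnj c * c"]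
    by (simp add: cscale_mult_left cscale_mult_right cscale_cscale cscale_diff_right mult.commute)
  ultimately have "adj w * w - cscale (cnj c * c) p \<in> J"
    using closed_ideal_add[OF J] by fastforce
  moreover have "cnj c * c = complex_of_real ((cmod c)\<^sup>2)"
    using complex_norm_square[of c] by (simp add: mult.commute)
  ultimately show ?thesis by simp
qed

lemma selfadjoint_congruent_in_ideal:
  fixes I J :: "'a::cstar_algebra set"
  assumes I: "closed_ideal UNIV I" and J: "closed_ideal UNIV J" and p: "min_proj_modulo UNIV J p"
    and i: "i \<in> I" and ipi: "p * i * p \<notin> J"
  shows "\<exists>q\<in>I. adj q = q \<and> q - p \<in> J"
proof -
  have pa: "adj p - p \<in> J" and pp: "p * p - p \<in> J"
    using p by (simp_all add: min_proj_modulo_def)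
  obtain c where c: "p * i * p - cscale c p \<in> J"
    using p by (auto simp: min_proj_modulo_def)
  with ipi have "c \<noteq> 0" by auto
  define w where "w = p * i * p"
  have wI: "w \<in> I"
    unfolding w_def by (rule closed_ideal_mult_right[OF I UNIV_I closed_ideal_mult_left[OF I UNIV_I i]])
  have w: "w - cscale c p \<in> J"
    using c by (simp add: w_def)
  have "adj w - cscale (cnj c) p =
      (adj p - p) * (adj i * adj p) + (p * adj i) * (adj p - p) + (p * adj i * p - cscale (cnj c) p)"
    by (simp add: w_def adj_mult algebra_simps)
  also have "\<dots> \<in> J"
    using closed_ideal_mult_right[OF J UNIV_I pa] closed_ideal_mult_left[OF J UNIV_I pa]
      compression_adj_congruent[OF J p c]
    by (intro closed_ideal_add[OF J])
  finally have aw: "adj w - cscale (cnj c) p \<in> J" .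
  define r where "r = (cmod c)\<^sup>2"
  have "r > 0"
    using \<open>c \<noteq> 0\<close> by (simp add: r_def)
  have ww: "adj w * w - cscale (complex_of_real r) p \<in> J"
    unfolding r_def by (rule adj_mult_self_congruent[OF J pp w aw])
  define q where "q = cscale (complex_of_real (1 / r)) (adj w * w)"
  have "q \<in> I"
    unfolding q_def by (rule closed_ideal_cscale[OF I closed_ideal_mult_left[OF I UNIV_I wI]])
  moreover have "adj q = q"
    by (simp add: q_def adj_cscale adj_mult adj_adj)
  moreover have "q - p = cscale (complex_of_real (1 / r)) (adj w * w - cscale (complex_of_real r) p)"
    using \<open>r > 0\<close> by (simp add: q_def cscale_diff_right cscale_cscale)
  then have "q - p \<in> J"
    using closed_ideal_cscale[OF J ww] by simp
  ultimately show ?thesis by blast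
qed

lemma min_proj_modulo_Int_ideal:
  fixes I J :: "'a::cstar_algebra set"
  assumes I: "closed_ideal UNIV I" and J: "closed_ideal UNIV J" and p: "min_proj_modulo UNIV J p"
    and q: "q \<in> I" "adj q = q" "q - p \<in> J"
  shows "min_proj_modulo I (J \<inter> I) q"
proof -
  have pJ: "p \<notin> J" and pp: "p * p - p \<in> J"
    using p by (simp_all add: min_proj_modulo_def)
  have "q \<notin> J"
  proof
    assume "q \<in> J"
    then have "q - (q - p) \<in> J"
      using closed_ideal_diff[OF J _ q(3)] by blast
    with pJ show False by simp
  qed
  moreover have "adj q - q \<in> J \<inter> I"
    using q(2) closed_ideal_zero[OF J] closed_ideal_zero[OF I] by simp
  moreover have "q * q - q \<in> J \<inter> I"
  proof
    have "q * q - q = (q * q - p * p) + (p * p - p) - (q - p)"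
      by (simp add: algebra_simps)
    also have "\<dots> \<in> J"
      by (rule closed_ideal_diff[OF J closed_ideal_add[OF J closed_ideal_mult_congruent[OF J q(3) q(3)] pp] q(3)])
    finally show "q * q - q \<in> J" .
    show "q * q - q \<in> I"
      by (rule closed_ideal_diff[OF I closed_ideal_mult_left[OF I UNIV_I q(1)] q(1)])
  qed
  moreover have "\<exists>c. q * b * q - cscale c q \<in> J \<inter> I" if "b \<in> I" for b
  proof -
    obtain c where c: "p * b * p - cscale c p \<in> J"
      using p by (auto simp: min_proj_modulo_def)
    have qbq: "q * b * q - p * b * p \<in> J"
      using closed_ideal_mult_congruent[OF J closed_ideal_mult_congruent[OF J q(3), of b b] q(3)]
      by (simp add: closed_ideal_zero[OF J])
    have "q * b * q - cscale c q = (q * b * q - p * b * p) + (p * b * p - cscale c p) - cscale c (q - p)"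
      by (simp add: algebra_simps cscale_diff_right)
    also have "\<dots> \<in> J"
      by (rule closed_ideal_diff[OF J closed_ideal_add[OF J qbq c] closed_ideal_cscale[OF J q(3)]])
    finally have "q * b * q - cscale c q \<in> J" .
    moreover have "q * b * q - cscale c q \<in> I"
      using closed_ideal_mult_left[OF I UNIV_I q(1), of "q * b"] closed_ideal_cscale[OF I q(1)]
      by (rule closed_ideal_diff[OF I])
    ultimately show ?thesis by blast
  qed
  ultimately show ?thesis
    using q(1) by (simp add: min_proj_modulo_def)
qed

lemma nowhere_scattered_if_ideal_and_quotient:
  fixes I :: "'a::cstar_algebra set"
  assumes I: "closed_ideal UNIV I" and nsI: "nowhere_scattered I"
    and nsQ: "nowhere_scattered_quotient UNIV I"
  shows "nowhere_scattered (UNIV::'a set)"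
  unfolding nowhere_scattered_def
proof (intro allI impI notI)
  fix J :: "'a set"
  assume J: "closed_ideal UNIV J" and "quotient_has_min_proj UNIV J"
  then obtain p where p: "min_proj_modulo UNIV J p"
    using quotient_has_min_proj_iff[OF closed_ideal_UNIV J] by blast
  show False
  proof (cases "\<forall>i\<in>I. p * i * p \<in> J")
    case True
    with nsQ show False
      using not_nowhere_scattered_quotient_if_compression_vanishes[OF I J p] by blast
  next
    case False
    then obtain q where "q \<in> I" "adj q = q" "q - p \<in> J"
      using selfadjoint_congruent_in_ideal[OF I J p] by blast
    then have "min_proj_modulo I (J \<inter> I) q"
      by (rule min_proj_modulo_Int_ideal[OF I J p])
    moreover have JI: "closed_ideal I (J \<inter> I)"
      by (rule closed_ideal_Int[OF I J])
    ultimately have "quotient_has_min_proj I (J \<inter> I)"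
      using quotient_has_min_proj_iff[OF I JI] by blast
    with nsI JI show False
      unfolding nowhere_scattered_def by blast
  qed
qed

theorem mainTheorem4:
  fixes I :: "'a::cstar_algebra set"
  assumes "closed_ideal UNIV I"
  shows "nowhere_scattered (UNIV :: 'a set) \<longleftrightarrow>
           nowhere_scattered I \<and> nowhere_scattered_quotient (UNIV :: 'a set) I"
  using nowhere_scattered_ideal[OF assms] nowhere_scattered_imp_quotient[of I]
    nowhere_scattered_if_ideal_and_quotient[OF assms]
  by blast

end
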